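(* Let $\alpha\in(0,1)$, $f=f_{M_1}$, and let $(x_n)$ and $M_0(n)=\frac1n\sum_{j=1}^nM_1(x_j)$ be as in the context. Set $c=e^{\alpha c_1}$ and $w_k=\lfloor c^k\rfloor$. Then there exists $\zeta\in\mathbb R$ such that $$\lim_{k\to\infty}\frac{w_{k+1}}{w_k}=c\qquad\text{and}\qquad\lim_{k\to\infty}M_0(w_k)=\zeta.$$
   Context: $f_{M_1}(x)=x(1+M_1(x)x^\alpha)$ on $[0,1/2]$, $2x-1$ on $(1/2,1]$, with $M_1(x)=C_0\,2^{-\{c_1^{-1}\log x\}}$ ($\{\cdot\}$ fractional part, $\{x\}=\{-x\}$ for $x<0$), $c_1>0$, $C_0$ chosen so $f_{M_1}((1/2)^-)=1$. Discontinuities $s_\ell=e^{-\ell c_1}$ with one-sided limits $f(s_\ell^\pm)$. Sequence: $x_0=1/2$; if $x_n\in[f(s_\ell^-),f(s_\ell^+)]$ for some $\ell$, $x_{n+1}=s_\ell$; otherwise $x_{n+1}\in(0,x_n)$ is the point with $f(x_{n+1})=x_n$. *)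

theory Defs
  imports "HOL-Analysis.Analysis"
begin

text \<open>Fractional part with the paper's convention: for y < 0 it is the
  fractional part of -y.\<close>
definition fracc :: "real \<Rightarrow> real" where
  "fracc y = (if y < 0 then frac (- y) else frac y)"

definition M1 :: "real \<Rightarrow> real \<Rightarrow> real \<Rightarrow> real" where
  "M1 C0 c1 x = C0 * 2 powr (- fracc (ln x / c1))"

text \<open>The map f_{M_1} on [0,1] (outside [0,1] its values are irrelevant).\<close>
definition fM1 :: "real \<Rightarrow> real \<Rightarrow> real \<Rightarrow> real \<Rightarrow> real" where
  "fM1 \<alpha> C0 c1 x = (if x \<le> 1/2 then x * (1 + M1 C0 c1 x * x powr \<alpha>) else 2 * x - 1)"

definition sdisc :: "real \<Rightarrow> nat \<Rightarrow> real" where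
  "sdisc c1 l = exp (- real l * c1)"

definition gapI :: "real \<Rightarrow> real \<Rightarrow> real \<Rightarrow> nat \<Rightarrow> real set" where
  "gapI \<alpha> C0 c1 l =
     (let a = Lim (at_left (sdisc c1 l)) (fM1 \<alpha> C0 c1);
          b = Lim (at_right (sdisc c1 l)) (fM1 \<alpha> C0 c1)
      in {min a b .. max a b})"

definition discidx :: "real \<Rightarrow> nat set" where
  "discidx c1 = {l. 1 \<le> l \<and> sdisc c1 l < 1/2}"

definition is_orbit :: "real \<Rightarrow> real \<Rightarrow> real \<Rightarrow> (nat \<Rightarrow> real) \<Rightarrow> bool" where
  "is_orbit \<alpha> C0 c1 x \<longleftrightarrow>
     x 0 = 1/2 \<and>
     (\<forall>n. (\<forall>l \<in> discidx c1. x n \<in> gapI \<alpha> C0 c1 l \<longrightarrow> x (Suc n) = sdisc c1 l) \<and>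
          ((\<nexists>l. l \<in> discidx c1 \<and> x n \<in> gapI \<alpha> C0 c1 l) \<longrightarrow>
             x (Suc n) \<in> {0<..<x n} \<and> fM1 \<alpha> C0 c1 (x (Suc n)) = x n))"

definition M0 :: "real \<Rightarrow> real \<Rightarrow> (nat \<Rightarrow> real) \<Rightarrow> nat \<Rightarrow> real" where
  "M0 C0 c1 x n = (1 / real n) * (\<Sum>j = 1..n. M1 C0 c1 (x j))"

end

theory Submission
  imports Defs "HOL-Real_Asymp.Real_Asymp"
begin

text \<open>
  Let u(n) = x(n) powr (-\<alpha>) and let \<tau>(n) = -log x(n) / c1 be the depth of x(n): the
  discontinuities s_l sit at the integer depths, M1 = C0 * 2 powr (-frac \<tau>) and u(n) = c powr \<tau>(n).
  Away from the steps on which \<tau> passes an integer, which have density zero because u grows at most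
  linearly, the relation x(n) = x(n+1) (1 + M1(x(n+1)) x(n+1) powr \<alpha>) gives
  u(n+1) - u(n) \<approx> \<alpha> M1(x(n+1)), so that M0(n) \<approx> u(n) / (\<alpha> n). The same relation raises the clock
  K(\<tau>(n)), where K(t) = 2 powr (frac t) * c powr t + c powr (\<lfloor>t\<rfloor> + 1) / (c - 1), by almost exactly
  \<kappa> C0 with \<kappa> = log (2c) / c1, because the factor 2 powr (frac t) cancels the oscillation of M1.
  By Cesaro, K(\<tau>(n)) / n \<rightarrow> \<kappa> C0. As K is strictly increasing with K(t + k) = c^k K(t), the values
  K(\<tau>(w k) - k) \<approx> K(\<tau>(w k)) / w k tend to \<kappa> C0, which forces \<tau>(w k) - k to converge; hence
  u(w k) / w k \<approx> c powr (\<tau>(w k) - k) and M0(w k) converge.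
\<close>

section \<open>Averages and limits\<close>

lemma tendsto_powr_difference_quotient:
  "((\<lambda>s. ((1 + s) powr p - 1) / s) \<longlongrightarrow> p) (at_right (0::real))"
proof -
  have "((\<lambda>s. (1 + s) powr p) has_real_derivative p) (at 0)"
    by (rule derivative_eq_intros refl | simp)+
  hence "((\<lambda>s. ((1 + s) powr p - 1) / s) \<longlongrightarrow> p) (at 0)"
    by (simp add: DERIV_def)
  thus ?thesis by (rule tendsto_mono[OF at_within_le_at])
qed

lemma cesaro_tendsto_zero:
  fixes b :: "nat \<Rightarrow> real"
  assumes "b \<longlonglongrightarrow> 0"
  shows "(\<lambda>n. (\<Sum>j<n. b j) / real n) \<longlonglongrightarrow> 0"
proof (rule LIMSEQ_I)
  fix r :: real assume r: "0 < r"
  obtain N where N: "\<And>j. N \<le> j \<Longrightarrow> \<bar>b j\<bar> < r / 2"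
    using LIMSEQ_D[OF assms, of "r / 2"] r by auto
  define S where "S = (\<Sum>j<N. \<bar>b j\<bar>)"
  obtain M :: nat where M: "2 * S / r < real M" using reals_Archimedean2 by blast
  have "\<bar>(\<Sum>j<n. b j) / real n\<bar> < r" if n: "max N (Suc M) \<le> n" for n
  proof -
    have "\<bar>\<Sum>j<n. b j\<bar> \<le> (\<Sum>j<n. (if j < N then \<bar>b j\<bar> else 0) + r / 2)"
      using N r by (intro order.trans[OF sum_abs] sum_mono) (auto simp: not_less less_imp_le)
    also have "\<dots> = S + real n * (r / 2)"
    proof -
      have "{..<n} \<inter> {j. j < N} = {..<N}" using n by auto
      thus ?thesis by (simp add: sum.distrib S_def sum.If_cases del: lessThan_iff)
    qed
    also have "\<dots> < real n * r"
    proof -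
      have "2 * S < r * real M" using M r by (simp add: field_simps)
      moreover have "r * real M < real n * r" using n r by (simp add: mult.commute)
      ultimately show ?thesis by linarith
    qed
    finally show ?thesis using n by (simp add: field_simps)
  qed
  thus "\<exists>no. \<forall>n\<ge>no. norm ((\<Sum>j<n. b j) / real n - 0) < r"
    by (intro exI[of _ "max N (Suc M)"]) auto
qed

lemma cesaro_tendsto_zero_sparse_exceptions:
  fixes d b :: "nat \<Rightarrow> real" and exc :: "nat \<Rightarrow> bool"
  assumes good: "\<And>n. \<not> exc n \<Longrightarrow> \<bar>d n\<bar> \<le> b n" and b: "b \<longlonglongrightarrow> 0"
    and exc_bound: "eventually (\<lambda>n. exc n \<longrightarrow> \<bar>d n\<bar> \<le> B) sequentially"
    and sparse: "(\<lambda>n. real (card {j. j < n \<and> exc j}) / real n) \<longlonglongrightarrow> 0"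
  shows "(\<lambda>n. (\<Sum>j<n. d j) / real n) \<longlonglongrightarrow> 0"
proof -
  obtain N where N: "\<And>n. N \<le> n \<Longrightarrow> exc n \<Longrightarrow> \<bar>d n\<bar> \<le> B"
    using exc_bound by (auto simp: eventually_sequentially)
  define S where "S = (\<Sum>j<N. \<bar>d j\<bar>)"
  define bound where "bound n = (\<Sum>j<n. \<bar>b j\<bar>) / real n
    + \<bar>B\<bar> * (real (card {j. j < n \<and> exc j}) / real n) + S / real n" for n
  have sum_bound: "\<bar>\<Sum>j<n. d j\<bar> \<le> (\<Sum>j<n. \<bar>b j\<bar>) + \<bar>B\<bar> * real (card {j. j < n \<and> exc j}) + S"
    for n
  proof -
    have "\<bar>\<Sum>j<n. d j\<bar>
        \<le> (\<Sum>j<n. \<bar>b j\<bar> + \<bar>B\<bar> * (if exc j then 1 else 0) + (if j < N then \<bar>d j\<bar> else 0))"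
    proof (intro order.trans[OF sum_abs] sum_mono)
      fix j
      show "\<bar>d j\<bar> \<le> \<bar>b j\<bar> + \<bar>B\<bar> * (if exc j then 1 else 0) + (if j < N then \<bar>d j\<bar> else 0)"
        using good[of j] N[of j] by (cases "exc j"; cases "j < N") auto
    qed
    moreover have "(\<Sum>j<n. \<bar>B\<bar> * (if exc j then 1 else 0)) = \<bar>B\<bar> * real (card {j. j < n \<and> exc j})"
      by (simp add: sum_distrib_left[symmetric] sum.inter_filter[symmetric])
    moreover have "(\<Sum>j<n. if j < N then \<bar>d j\<bar> else 0) \<le> S"
      unfolding S_def sum.inter_filter[OF finite_lessThan, symmetric] by (intro sum_mono2) auto
    ultimately show ?thesis by (simp add: sum.distrib)
  qed
  have le_bound: "norm ((\<Sum>j<n. d j) / real n) \<le> bound n" for n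
  proof -
    have "\<bar>(\<Sum>j<n. d j) / real n\<bar>
        \<le> ((\<Sum>j<n. \<bar>b j\<bar>) + \<bar>B\<bar> * real (card {j. j < n \<and> exc j}) + S) / real n"
      using sum_bound[of n] by (simp add: divide_right_mono)
    thus ?thesis by (simp add: bound_def add_divide_distrib)
  qed
  have "bound \<longlonglongrightarrow> 0 + \<bar>B\<bar> * 0 + 0"
    unfolding bound_def using b
    by (intro tendsto_add tendsto_mult tendsto_const cesaro_tendsto_zero sparse lim_const_over_n)
      (simp add: tendsto_rabs_zero_iff)
  hence "bound \<longlonglongrightarrow> 0" by simp
  moreover have "eventually (\<lambda>n. norm ((\<Sum>j<n. d j) / real n) \<le> bound n) sequentially"
    using le_bound by simp
  ultimately show ?thesis by (rule Lim_null_comparison[rotated])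
qed

lemma convergent_if_strict_mono_comp_tendsto:
  fixes g :: "real \<Rightarrow> real" and \<sigma> :: "nat \<Rightarrow> real"
  assumes g: "strict_mono g" and lim: "(\<lambda>k. g (\<sigma> k)) \<longlonglongrightarrow> A"
    and t0: "g t0 \<le> A" and t1: "A < g t1"
  shows "convergent \<sigma>"
proof -
  define S where "S = {t. g t \<le> A}"
  have "t0 \<in> S" using t0 by (simp add: S_def)
  have "t \<le> t1" if "t \<in> S" for t
    using that t1 strict_mono_less[OF g, of t1 t] by (auto simp: S_def)
  hence bdd: "bdd_above S" by (auto simp: bdd_above_def)
  have "\<sigma> \<longlonglongrightarrow> Sup S"
  proof (rule order_tendstoI)
    fix a assume "a < Sup S"
    then obtain t where "t \<in> S" "a < t" using less_cSupE[of a S] \<open>t0 \<in> S\<close> by blast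
    hence "g a < A" using strict_mono_less[OF g, of a t] by (simp add: S_def)
    with lim have "eventually (\<lambda>k. g a < g (\<sigma> k)) sequentially" by (rule order_tendstoD)
    thus "eventually (\<lambda>k. a < \<sigma> k) sequentially"
      by eventually_elim (simp add: strict_mono_less[OF g])
  next
    fix a assume "Sup S < a"
    hence "a \<notin> S" using cSup_upper[OF _ bdd, of a] by fastforce
    hence "A < g a" by (simp add: S_def)
    with lim have "eventually (\<lambda>k. g (\<sigma> k) < g a) sequentially" by (rule order_tendstoD)
    thus "eventually (\<lambda>k. \<sigma> k < a) sequentially"
      by eventually_elim (simp add: strict_mono_less[OF g])
  qed
  thus ?thesis by (rule convergentI)
qed

lemma floor_power_over_power_tendsto:
  fixes c :: real
  assumes c: "1 < c"
  shows "(\<lambda>k. real (nat \<lfloor>c ^ k\<rfloor>) / c ^ k) \<longlonglongrightarrow> 1"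
proof (rule tendsto_sandwich)
  have ck: "1 \<le> c ^ k" for k using c by simp
  show "eventually (\<lambda>k. 1 - (1 / c) ^ k \<le> real (nat \<lfloor>c ^ k\<rfloor>) / c ^ k) sequentially"
  proof (intro always_eventually allI)
    fix k
    have "(c ^ k - 1) / c ^ k \<le> real (nat \<lfloor>c ^ k\<rfloor>) / c ^ k"
      using ck[of k] by (intro divide_right_mono) linarith+
    moreover have "(c ^ k - 1) / c ^ k = 1 - (1 / c) ^ k"
      using c by (simp add: power_one_over diff_divide_distrib)
    ultimately show "1 - (1 / c) ^ k \<le> real (nat \<lfloor>c ^ k\<rfloor>) / c ^ k" by simp
  qed
  show "eventually (\<lambda>k. real (nat \<lfloor>c ^ k\<rfloor>) / c ^ k \<le> 1) sequentially"
    using ck by (intro always_eventually allI) (simp add: divide_le_eq)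
  have "(\<lambda>k. (1 / c) ^ k) \<longlonglongrightarrow> 0" using c by (intro LIMSEQ_power_zero) simp
  hence "(\<lambda>k. 1 - (1 / c) ^ k) \<longlonglongrightarrow> 1 - 0" by (intro tendsto_diff tendsto_const)
  thus "(\<lambda>k. 1 - (1 / c) ^ k) \<longlonglongrightarrow> 1" by simp
qed simp

lemma Suc_ratio_tendsto_if_asymp_power:
  fixes v :: "nat \<Rightarrow> real"
  assumes lim: "(\<lambda>k. v k / c ^ k) \<longlonglongrightarrow> 1" and c: "c \<noteq> 0"
  shows "(\<lambda>k. v (Suc k) / v k) \<longlonglongrightarrow> c"
proof -
  have "(\<lambda>k. c * ((v (Suc k) / c ^ Suc k) / (v k / c ^ k))) \<longlonglongrightarrow> c * (1 / 1)"
    using lim LIMSEQ_Suc[OF lim] by (intro tendsto_intros) auto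
  moreover have "c * ((v (Suc k) / c ^ Suc k) / (v k / c ^ k)) = v (Suc k) / v k" for k
    using c by (cases "v k = 0") (simp_all add: field_simps)
  ultimately show ?thesis by (simp only: div_by_1 mult_1_right)
qed

lemma tendsto_ln_affine_over_n:
  "0 < K \<Longrightarrow> 0 < b \<Longrightarrow> (\<lambda>n::nat. ln (K + b * real n) / real n) \<longlonglongrightarrow> 0"
  by real_asymp

lemma one_minus_mult_le_powr_neg:
  fixes a s :: real
  assumes "0 \<le> a" "0 \<le> s"
  shows "1 - a * s \<le> (1 + s) powr (- a)"
proof -
  have "1 - a * s \<le> 1 - a * ln (1 + s)"
    using assms ln_add_one_self_le_self[of s] by (simp add: mult_left_mono)
  also have "\<dots> \<le> exp (- a * ln (1 + s))" using exp_ge_add_one_self[of "- a * ln (1 + s)"] by simp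
  also have "\<dots> = (1 + s) powr (- a)" using assms by (simp add: powr_def)
  finally show ?thesis .
qed

lemma filterlim_at_top_if_asymp_power:
  fixes w :: "nat \<Rightarrow> nat"
  assumes c: "1 < c" and w: "(\<lambda>k. real (w k) / c ^ k) \<longlonglongrightarrow> 1"
  shows "filterlim w at_top sequentially"
proof -
  have "filterlim (\<lambda>k. c ^ k) at_top sequentially"
    using c by (intro filterlim_at_infinity_imp_filterlim_at_top filterlim_realpow_sequentially_gt1) auto
  hence "filterlim (\<lambda>k. real (w k) / c ^ k * c ^ k) at_top sequentially"
    by (rule filterlim_tendsto_pos_mult_at_top[OF w, rotated]) simp
  thus ?thesis using c by (simp add: filterlim_sequentially_iff_filterlim_real)
qed

section \<open>The clock\<close>

text \<open>The summand c / (c - 1) compensates the downward jumps of (2c) powr (frac t) * c powr \<lfloor>t\<rfloor> at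
  the integers, making the clock continuous and strictly increasing.\<close>

definition clock :: "real \<Rightarrow> real \<Rightarrow> real" where
  "clock c t = c powr \<lfloor>t\<rfloor> * ((2 * c) powr frac t + c / (c - 1))"

lemma clock_pos: "1 < c \<Longrightarrow> 0 < clock c t"
  by (simp add: clock_def add_pos_pos)

lemma clock_add_of_nat:
  assumes c: "1 < c"
  shows "clock c (t + real k) = c ^ k * clock c t"
proof -
  have fl: "\<lfloor>t + real k\<rfloor> = \<lfloor>t\<rfloor> + int k" by linarith
  have "frac (t + real k) = frac t" by (simp add: frac_def fl)
  moreover have "c powr real_of_int (\<lfloor>t\<rfloor> + int k) = c powr real_of_int \<lfloor>t\<rfloor> * c ^ k"
    using c by (simp add: powr_add powr_realpow)
  ultimately show ?thesis by (simp add: clock_def fl)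
qed

lemma strict_mono_clock:
  assumes c: "1 < c"
  shows "strict_mono (clock c)"
proof (rule strict_monoI)
  fix t t' :: real assume "t < t'"
  show "clock c t < clock c t'"
  proof (cases "\<lfloor>t\<rfloor> = \<lfloor>t'\<rfloor>")
    case True
    hence "frac t < frac t'" using \<open>t < t'\<close> by (simp add: frac_def)
    hence "(2 * c) powr frac t < (2 * c) powr frac t'" using c by (intro powr_less_mono) auto
    thus ?thesis using True c by (simp add: clock_def)
  next
    case False
    hence next_floor: "\<lfloor>t\<rfloor> + 1 \<le> \<lfloor>t'\<rfloor>" using floor_mono[of t t'] \<open>t < t'\<close> by linarith
    have "(2 * c) powr frac t < (2 * c) powr 1" using c frac_lt_1[of t] by (intro powr_less_mono) auto
    hence "clock c t < c powr \<lfloor>t\<rfloor> * (2 * c + c / (c - 1))" using c by (simp add: clock_def)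
    also have "\<dots> = c powr (\<lfloor>t\<rfloor> + 1) * (1 + c / (c - 1))"
      using c by (simp add: powr_add field_simps)
    also have "\<dots> \<le> c powr \<lfloor>t'\<rfloor> * (1 + c / (c - 1))"
      using c next_floor by (intro mult_right_mono powr_mono) auto
    also have "\<dots> \<le> clock c t'"
      using c ge_one_powr_ge_zero[of "2 * c" "frac t'"] by (simp add: clock_def)
    finally show ?thesis .
  qed
qed

lemma clock_diff_across_integer:
  assumes c: "1 < c" and fl: "\<lfloor>t\<rfloor> = \<lfloor>t'\<rfloor> - 1"
  shows "clock c t' - clock c t
    = c powr \<lfloor>t'\<rfloor> * ((2 * c) powr (t' - \<lfloor>t'\<rfloor>) + 1 - 2 * (2 * c) powr (t - \<lfloor>t'\<rfloor>))"
proof -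
  define l P Q where "l = \<lfloor>t'\<rfloor>" and "P = (2 * c) powr (t' - l)" and "Q = (2 * c) powr (t - l)"
  have "frac t = 1 + (t - l)" "frac t' = t' - l" by (simp_all add: frac_def fl l_def)
  hence "(2 * c) powr frac t = 2 * c * Q" "(2 * c) powr frac t' = P"
    using c by (simp_all add: P_def Q_def powr_add)
  moreover have "c powr (l - 1) = c powr l / c" using c by (simp add: powr_diff)
  ultimately have "clock c t = c powr l / c * (2 * c * Q + c / (c - 1))"
    and "clock c t' = c powr l * (P + c / (c - 1))"
    by (simp_all add: clock_def fl l_def[symmetric])
  moreover have "c powr l / c * (2 * c * Q + c / (c - 1)) = 2 * c powr l * Q + c powr l / (c - 1)"
    and "c powr l * (P + c / (c - 1)) = c powr l * P + c powr l + c powr l / (c - 1)"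
    using c by (simp_all add: field_simps)
  ultimately have "clock c t' - clock c t = c powr l * (P + 1 - 2 * Q)" by (simp add: algebra_simps)
  thus ?thesis by (simp add: P_def Q_def l_def)
qed

lemma clock_diff_le_across_integer:
  assumes c: "1 < c" and t: "t < t'" "t' - t < 1" "\<lfloor>t\<rfloor> \<noteq> \<lfloor>t'\<rfloor>"
  shows "clock c t' - clock c t \<le> 3 * c powr t' * ((2 * c) powr (t' - t) - 1)"
proof -
  define l where "l = \<lfloor>t'\<rfloor>"
  have fl: "\<lfloor>t\<rfloor> = l - 1"
    using t floor_mono[of t t'] of_int_floor_le[of t'] by (simp add: l_def floor_eq_iff) linarith
  define P Q R where "P = (2 * c) powr (t' - l)" and "Q = (2 * c) powr (t - l)"
    and "R = (2 * c) powr (t' - t)"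
  have c2: "1 < 2 * c" using c by simp
  have "1 \<le> P" unfolding P_def using c2 of_int_floor_le[of t'] by (intro ge_one_powr_ge_zero) (auto simp: l_def)
  moreover have "P \<le> R" unfolding P_def R_def using c2 fl by (intro powr_mono) linarith+
  moreover have "1 / R \<le> Q"
    unfolding Q_def R_def using c2 t(1) by (simp add: powr_minus_divide[symmetric] l_def)
  ultimately have "P + 1 - 2 * Q \<le> R + 1 - 2 / R" "1 \<le> R" by auto
  moreover have "R + 1 - 2 / R \<le> 3 * (R - 1)" if "1 \<le> R"
  proof -
    have "0 \<le> 2 * (R - 1)\<^sup>2 / R" using that by simp
    also have "\<dots> = 3 * (R - 1) - (R + 1 - 2 / R)" using that by (simp add: field_simps power2_eq_square)
    finally show ?thesis by simp
  qed
  ultimately have PQR: "P + 1 - 2 * Q \<le> 3 * (R - 1)" "0 \<le> 3 * (R - 1)" by auto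
  have "clock c t' - clock c t = c powr l * (P + 1 - 2 * Q)"
    using clock_diff_across_integer[OF c fl[unfolded l_def]] by (simp add: P_def Q_def l_def)
  also have "\<dots> \<le> c powr l * (3 * (R - 1))" using PQR by (intro mult_left_mono) auto
  also have "\<dots> \<le> c powr t' * (3 * (R - 1))"
    using c PQR of_int_floor_le[of t'] by (intro mult_right_mono powr_mono) (auto simp: l_def)
  finally show ?thesis by (simp add: R_def algebra_simps)
qed

lemma convergent_if_clock_comp_tendsto:
  assumes c: "1 < c" and A: "0 < A" and lim: "(\<lambda>k. clock c (\<sigma> k)) \<longlonglongrightarrow> A"
  shows "convergent \<sigma>"
proof -
  have clock0: "0 < clock c 0" using c by (rule clock_pos)
  obtain m :: nat where m: "clock c 0 / A < c ^ m" using real_arch_pow[OF c] by blast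
  obtain M :: nat where M: "A / clock c 0 < c ^ M" using real_arch_pow[OF c] by blast
  have "clock c 0 = c ^ m * clock c (- real m)" using clock_add_of_nat[OF c, of "- real m" m] by simp
  hence "clock c (- real m) \<le> A" using m A c by (simp add: field_simps)
  moreover have "A < clock c (0 + real M)"
    using M clock0 clock_add_of_nat[OF c, of 0 M] by (simp add: field_simps)
  ultimately show ?thesis by (rule convergent_if_strict_mono_comp_tendsto[OF strict_mono_clock[OF c] lim])
qed

section \<open>The backward orbit\<close>

lemma C0_pos_if_left_limit_one:
  assumes lim: "(fM1 \<alpha> C0 c1 \<longlongrightarrow> 1) (at_left (1/2))"
  shows "0 < C0"
proof (rule ccontr)
  assume "\<not> 0 < C0"
  have "eventually (\<lambda>y. y \<in> {0<..<1/2}) (at_left (1/2::real))"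
    by (rule eventually_at_left_real) simp
  hence "eventually (\<lambda>y. fM1 \<alpha> C0 c1 y \<le> 1/2) (at_left (1/2::real))"
  proof (rule eventually_mono)
    fix y :: real assume y: "y \<in> {0<..<1/2}"
    have "M1 C0 c1 y * y powr \<alpha> \<le> 0"
      using \<open>\<not> 0 < C0\<close> by (simp add: M1_def mult_nonpos_nonneg)
    hence "y * (1 + M1 C0 c1 y * y powr \<alpha>) \<le> y" using y by (simp add: mult_nonpos_nonneg)
    moreover have "fM1 \<alpha> C0 c1 y = y * (1 + M1 C0 c1 y * y powr \<alpha>)" using y by (simp add: fM1_def)
    moreover have "y < 1/2" using y by simp
    ultimately show "fM1 \<alpha> C0 c1 y \<le> 1/2" by linarith
  qed
  hence "(1::real) \<le> 1/2" using lim by (intro tendsto_upperbound) auto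
  thus False by simp
qed

locale backward_orbit =
  fixes a C c1 :: real and x :: "nat \<Rightarrow> real"
  assumes a_pos: "0 < a" and c1_pos: "0 < c1" and C_pos: "0 < C"
    and orbit: "is_orbit a C c1 x"
begin

definition depth :: "real \<Rightarrow> real" where
  "depth y = - ln y / c1"

lemma M1_eq_depth: "0 < y \<Longrightarrow> y < 1 \<Longrightarrow> M1 C c1 y = C * 2 powr (- frac (depth y))"
  using c1_pos by (simp add: M1_def fracc_def depth_def divide_neg_pos)

lemma M1_bounds:
  assumes "0 < y" "y < 1"
  shows "C / 2 \<le> M1 C c1 y" "M1 C c1 y \<le> C"
proof -
  define p where "p = 2 powr (- frac (depth y))"
  have "2 powr (-1) \<le> p" "p \<le> 2 powr 0"
    unfolding p_def using frac_lt_1[of "depth y"] by (intro powr_mono; simp)+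
  hence "1 / 2 \<le> p" "p \<le> 1" by (simp_all add: powr_minus)
  thus "C / 2 \<le> M1 C c1 y" "M1 C c1 y \<le> C"
    using M1_eq_depth[OF assms] C_pos mult_left_mono[of "1/2" p C] mult_left_mono[of p 1 C]
    by (simp_all add: p_def)
qed

lemma depth_sdisc [simp]: "depth (sdisc c1 l) = real l"
  using c1_pos by (simp add: depth_def sdisc_def)

lemma sdisc_pos: "0 < sdisc c1 l"
  by (simp add: sdisc_def)

lemma depth_less_iff: "0 < y \<Longrightarrow> 0 < z \<Longrightarrow> depth y < depth z \<longleftrightarrow> z < y"
  using c1_pos by (simp add: depth_def divide_less_cancel)

lemma of_nat_less_depth_iff: "0 < y \<Longrightarrow> real l < depth y \<longleftrightarrow> y < sdisc c1 l"
  using depth_less_iff[of "sdisc c1 l" y] sdisc_pos by simp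

lemma depth_less_of_nat_iff: "0 < y \<Longrightarrow> depth y < real l \<longleftrightarrow> sdisc c1 l < y"
  using depth_less_iff[of y "sdisc c1 l"] sdisc_pos by simp

lemma fM1_eq_on_level:
  assumes "0 < y" "y \<le> 1/2" "of_int j \<le> depth y" "depth y < of_int j + 1"
  shows "fM1 a C c1 y = y * (1 + C * 2 powr (j - depth y) * y powr a)"
proof -
  have "frac (depth y) = depth y - j"
    using assms(3,4) by (simp add: frac_unique_iff)
  thus ?thesis using assms(1,2) M1_eq_depth[of y] by (simp add: fM1_def)
qed

lemma gapI_eq:
  assumes "l \<in> discidx c1"
  defines "s \<equiv> sdisc c1 l"
  shows "gapI a C c1 l = {s * (1 + C / 2 * s powr a) .. s * (1 + C * s powr a)}"
proof -
  have l: "1 \<le> l" "s < 1/2" and s_pos: "0 < s"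
    using assms sdisc_pos by (auto simp: discidx_def)
  define g where "g j y = y * (1 + C * 2 powr (j - depth y) * y powr a)" for j y
  have g_cont: "((g j) \<longlongrightarrow> g j s) (at s)" for j
    using s_pos c1_pos unfolding g_def depth_def by (intro tendsto_intros) auto
  have "sdisc c1 (Suc l) < s" using c1_pos by (simp add: s_def sdisc_def algebra_simps)
  hence "eventually (\<lambda>y. y \<in> {sdisc c1 (Suc l)<..<s}) (at_left s)" by (rule eventually_at_left_real)
  hence "eventually (\<lambda>y. fM1 a C c1 y = g (real l) y) (at_left s)"
  proof (rule eventually_mono)
    fix y assume y: "y \<in> {sdisc c1 (Suc l)<..<s}"
    hence "0 < y" using sdisc_pos[of "Suc l"] by auto
    thus "fM1 a C c1 y = g (real l) y"
      using y l of_nat_less_depth_iff[of y l] depth_less_of_nat_iff[of y "Suc l"]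
        fM1_eq_on_level[of y "int l"]
      by (auto simp: g_def s_def)
  qed
  moreover have "g (real l) s = s * (1 + C * s powr a)" by (simp add: g_def s_def)
  ultimately have left: "(fM1 a C c1 \<longlongrightarrow> s * (1 + C * s powr a)) (at_left s)"
    using tendsto_mono[OF at_within_le_at g_cont[of "real l"]] by (simp add: tendsto_cong)
  have "s < min (1/2) (sdisc c1 (l - 1))"
    using c1_pos l by (simp add: s_def sdisc_def of_nat_diff algebra_simps)
  hence "eventually (\<lambda>y. y \<in> {s<..<min (1/2) (sdisc c1 (l - 1))}) (at_right s)"
    by (rule eventually_at_right_real)
  hence "eventually (\<lambda>y. fM1 a C c1 y = g (real l - 1) y) (at_right s)"
  proof (rule eventually_mono)
    fix y assume y: "y \<in> {s<..<min (1/2) (sdisc c1 (l - 1))}"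
    hence "0 < y" using s_pos by auto
    thus "fM1 a C c1 y = g (real l - 1) y"
      using y l of_nat_less_depth_iff[of y "l - 1"] depth_less_of_nat_iff[of y l]
        fM1_eq_on_level[of y "int l - 1"]
      by (auto simp: g_def s_def of_nat_diff)
  qed
  moreover have "g (real l - 1) s = s * (1 + C / 2 * s powr a)"
    by (simp add: g_def s_def powr_minus_divide)
  ultimately have right: "(fM1 a C c1 \<longlongrightarrow> s * (1 + C / 2 * s powr a)) (at_right s)"
    using tendsto_mono[OF at_within_le_at g_cont[of "real l - 1"]] by (simp add: tendsto_cong)
  have "s * (1 + C / 2 * s powr a) \<le> s * (1 + C * s powr a)"
    using s_pos C_pos by (intro mult_left_mono) auto
  thus ?thesis
    using tendsto_Lim[OF _ left] tendsto_Lim[OF _ right] by (simp add: gapI_def s_def)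
qed

definition gap_step :: "nat \<Rightarrow> bool" where
  "gap_step n \<longleftrightarrow> (\<exists>l\<in>discidx c1. x n \<in> gapI a C c1 l)"

lemma orbit_step:
  assumes xn: "0 < x n" "x n \<le> 1/2"
  defines "y \<equiv> x (Suc n)"
  shows "0 < y \<and> y < x n \<and> y * (1 + C / 2 * y powr a) \<le> x n \<and> x n \<le> y * (1 + C * y powr a)
    \<and> (\<not> gap_step n \<longrightarrow> x n = y * (1 + M1 C c1 y * y powr a))
    \<and> (gap_step n \<longrightarrow> (\<exists>l. y = sdisc c1 l))"
proof (cases "gap_step n")
  case True
  then obtain l where l: "l \<in> discidx c1" "x n \<in> gapI a C c1 l" by (auto simp: gap_step_def)
  hence y: "y = sdisc c1 l" using orbit by (auto simp: is_orbit_def y_def)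
  have y_pos: "0 < y" using y sdisc_pos by simp
  have bounds: "y * (1 + C / 2 * y powr a) \<le> x n" "x n \<le> y * (1 + C * y powr a)"
    using l gapI_eq[OF l(1)] y by auto
  moreover have "y < y * (1 + C / 2 * y powr a)" using y_pos C_pos by simp
  ultimately have "y < x n" by linarith
  thus ?thesis using True y y_pos bounds by auto
next
  case False
  hence y: "0 < y" "y < x n" "fM1 a C c1 y = x n"
    using orbit by (auto simp: is_orbit_def gap_step_def y_def)
  hence eq: "x n = y * (1 + M1 C c1 y * y powr a)" using xn by (simp add: fM1_def)
  have "C / 2 * y powr a \<le> M1 C c1 y * y powr a" "M1 C c1 y * y powr a \<le> C * y powr a"
    using M1_bounds[of y] y xn by (auto intro: mult_right_mono)
  hence "y * (1 + C / 2 * y powr a) \<le> x n" "x n \<le> y * (1 + C * y powr a)"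
    unfolding eq using y by (auto intro: mult_left_mono)
  thus ?thesis using False y eq by auto
qed

lemma x_pos_le_half: "0 < x n \<and> x n \<le> 1/2"
proof (induction n)
  case 0
  show ?case using orbit by (simp add: is_orbit_def)
next
  case (Suc n)
  thus ?case using orbit_step[of n] by auto
qed

lemma x_pos: "0 < x n" and x_less_1: "x n < 1"
  using x_pos_le_half[of n] by auto

lemma x_Suc_less: "x (Suc n) < x n"
  and x_lower: "x (Suc n) * (1 + C / 2 * x (Suc n) powr a) \<le> x n"
  and x_upper: "x n \<le> x (Suc n) * (1 + C * x (Suc n) powr a)"
  and x_eq_non_gap: "\<not> gap_step n \<Longrightarrow> x n = x (Suc n) * (1 + M1 C c1 (x (Suc n)) * x (Suc n) powr a)"
  and x_Suc_gap: "gap_step n \<Longrightarrow> \<exists>l. x (Suc n) = sdisc c1 l"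
  using orbit_step[of n] x_pos_le_half[of n] by auto

lemma x_tendsto_zero: "x \<longlonglongrightarrow> 0"
proof -
  have "decseq x" using x_Suc_less by (intro decseq_SucI less_imp_le)
  moreover have x_nonneg: "\<forall>n. 0 \<le> x n" using x_pos less_imp_le by blast
  ultimately obtain L where L: "x \<longlonglongrightarrow> L" using decseq_convergent by blast
  have "0 \<le> L" using x_nonneg by (intro LIMSEQ_le_const[OF L]) auto
  have "L = 0"
  proof (rule ccontr)
    assume "L \<noteq> 0"
    with \<open>0 \<le> L\<close> have "0 < L" by simp
    have "(\<lambda>n. x (Suc n) * (1 + C / 2 * x (Suc n) powr a)) \<longlonglongrightarrow> L * (1 + C / 2 * L powr a)"
      using LIMSEQ_Suc[OF L] \<open>0 < L\<close> by (intro tendsto_intros) auto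
    hence "L * (1 + C / 2 * L powr a) \<le> L"
      by (rule LIMSEQ_le[OF _ L]) (use x_lower in blast)
    moreover have "L < L * (1 + C / 2 * L powr a)" using \<open>0 < L\<close> C_pos by simp
    ultimately show False by linarith
  qed
  thus ?thesis using L by simp
qed

definition base :: real where
  "base = exp (a * c1)"

definition kappa :: real where
  "kappa = ln (2 * base) / c1"

lemma base_gt_1: "1 < base"
  using a_pos c1_pos by (simp add: base_def)

lemma kappa_pos: "0 < kappa"
  using base_gt_1 c1_pos by (simp add: kappa_def)

lemma base_powr_depth: "0 < y \<Longrightarrow> base powr depth y = y powr (- a)"
  using c1_pos by (simp add: powr_def base_def depth_def)

lemma two_base_powr_depth_diff:
  "0 < y \<Longrightarrow> 0 < z \<Longrightarrow> (2 * base) powr (depth y - depth z) = (z / y) powr kappa"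
  using c1_pos base_gt_1 by (simp add: powr_def kappa_def depth_def ln_div field_simps)

definition u :: "nat \<Rightarrow> real" where
  "u n = x n powr (- a)"

definition T :: "nat \<Rightarrow> real" where
  "T n = clock base (depth (x n))"

definition crossing :: "nat \<Rightarrow> bool" where
  "crossing n \<longleftrightarrow> \<lfloor>depth (x (Suc n))\<rfloor> \<noteq> \<lfloor>depth (x n)\<rfloor>"

definition theta :: "nat \<Rightarrow> real" where
  "theta n = M1 C c1 (x (Suc n)) * x (Suc n) powr a"

lemma u_eq_base_powr: "u n = base powr depth (x n)"
  by (simp add: u_def base_powr_depth[OF x_pos])

lemma depth_Suc_gt: "depth (x n) < depth (x (Suc n))"
  using depth_less_iff[OF x_pos x_pos] x_Suc_less by simp

lemma gap_step_imp_crossing: "gap_step n \<Longrightarrow> crossing n"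
proof -
  assume "gap_step n"
  then obtain l where l: "x (Suc n) = sdisc c1 l" using x_Suc_gap by blast
  hence "depth (x n) < real l" using depth_less_of_nat_iff[OF x_pos] x_Suc_less[of n] by simp
  thus "crossing n" using l by (simp add: crossing_def floor_less_iff) linarith
qed

lemma theta_pos: "0 < theta n"
proof -
  have "0 < M1 C c1 (x (Suc n))" using M1_bounds[OF x_pos x_less_1, of "Suc n"] C_pos by linarith
  thus ?thesis using x_pos[of "Suc n"] by (simp add: theta_def)
qed

lemma theta_le: "theta n \<le> C * x (Suc n) powr a"
  using M1_bounds[OF x_pos x_less_1, of "Suc n"] by (simp add: theta_def mult_right_mono)

lemma x_eq_non_crossing: "\<not> crossing n \<Longrightarrow> x n = x (Suc n) * (1 + theta n)"
proof -
  assume "\<not> crossing n"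
  hence "\<not> gap_step n" using gap_step_imp_crossing by blast
  thus ?thesis by (simp add: x_eq_non_gap theta_def)
qed

lemma clock_slope_mult_theta:
  "base powr \<lfloor>depth (x (Suc n))\<rfloor> * (2 * base) powr frac (depth (x (Suc n))) * theta n = C"
proof -
  define y where "y = x (Suc n)"
  have y: "0 < y" "y < 1" using x_pos x_less_1 by (auto simp: y_def)
  define l f where "l = real_of_int \<lfloor>depth y\<rfloor>" and "f = frac (depth y)"
  have M1_y: "M1 C c1 y = C * 2 powr (- f)" using M1_eq_depth[OF y] by (simp add: f_def)
  have base_lf: "base powr l * base powr f = y powr (- a)"
    using base_powr_depth[OF y(1)] by (simp add: powr_add[symmetric] l_def f_def frac_def)
  have one: "2 powr f * 2 powr (- f) = 1" "y powr (- a) * y powr a = 1"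
    using y by (simp_all add: powr_add[symmetric])
  have "base powr l * (2 * base) powr f * theta n
      = C * (2 powr f * 2 powr (- f)) * ((base powr l * base powr f) * y powr a)"
    using base_gt_1 by (simp add: theta_def y_def[symmetric] M1_y powr_mult ac_simps)
  also have "\<dots> = C" unfolding base_lf one by simp
  finally show ?thesis by (simp add: l_def f_def y_def)
qed

lemma T_increment_non_crossing:
  assumes "\<not> crossing n"
  shows "T (Suc n) - T n = C * (1 - (1 + theta n) powr (- kappa)) / theta n"
proof -
  define y \<theta> where "y = x (Suc n)" and "\<theta> = theta n"
  have y: "0 < y" and \<theta>: "0 < \<theta>" using x_pos theta_pos by (auto simp: y_def \<theta>_def)
  define l f where "l = real_of_int \<lfloor>depth y\<rfloor>" and "f = frac (depth y)"
  have "depth (x n) = depth y - ln (1 + \<theta>) / c1"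
    using y \<theta> x_eq_non_crossing[OF assms]
    by (simp add: depth_def ln_mult diff_divide_distrib y_def \<theta>_def)
  moreover have "\<lfloor>depth (x n)\<rfloor> = \<lfloor>depth y\<rfloor>" using assms by (simp add: crossing_def y_def)
  ultimately have frac_xn: "frac (depth (x n)) = f - ln (1 + \<theta>) / c1"
    and floor_xn: "\<lfloor>depth (x n)\<rfloor> = l"
    by (simp_all add: frac_def f_def l_def)
  have "(2 * base) powr (ln (1 + \<theta>) / c1) = (1 + \<theta>) powr kappa"
    using two_base_powr_depth_diff[of 1 "1 + \<theta>"] \<theta> c1_pos by (simp add: depth_def)
  hence "(2 * base) powr (f - ln (1 + \<theta>) / c1) = (2 * base) powr f * (1 + \<theta>) powr (- kappa)"
    using base_gt_1 by (simp add: powr_diff powr_minus divide_inverse)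
  hence "T n = base powr l * ((2 * base) powr f * (1 + \<theta>) powr (- kappa) + base / (base - 1))"
    by (simp add: T_def clock_def frac_xn floor_xn)
  moreover have "T (Suc n) = base powr l * ((2 * base) powr f + base / (base - 1))"
    by (simp add: T_def clock_def y_def[symmetric] f_def l_def)
  ultimately have "T (Suc n) - T n = base powr l * (2 * base) powr f * (1 - (1 + \<theta>) powr (- kappa))"
    by (simp add: algebra_simps)
  moreover have "base powr l * (2 * base) powr f = C / \<theta>"
    using clock_slope_mult_theta[of n] \<theta> by (simp add: l_def f_def y_def \<theta>_def field_simps)
  ultimately show ?thesis by (simp add: \<theta>_def)
qed

lemma u_increment_non_crossing:
  assumes "\<not> crossing n"
  shows "u (Suc n) - u n = M1 C c1 (x (Suc n)) * (1 - (1 + theta n) powr (- a)) / theta n"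
proof -
  define y \<theta> where "y = x (Suc n)" and "\<theta> = theta n"
  have y: "0 < y" and \<theta>: "0 < \<theta>" using x_pos theta_pos by (auto simp: y_def \<theta>_def)
  have "y powr (- a) * \<theta> = M1 C c1 y * (y powr (- a) * y powr a)"
    by (simp add: \<theta>_def theta_def y_def[symmetric] ac_simps)
  also have "\<dots> = M1 C c1 y" using y by (simp add: powr_add[symmetric])
  finally have M1_y: "M1 C c1 y = y powr (- a) * \<theta>" ..
  have "u (Suc n) - u n = y powr (- a) - y powr (- a) * (1 + \<theta>) powr (- a)"
    using y \<theta> x_eq_non_crossing[OF assms] by (simp add: u_def powr_mult y_def \<theta>_def)
  also have "\<dots> = y powr (- a) * \<theta> * (1 - (1 + \<theta>) powr (- a)) / \<theta>"
    using \<theta> by (simp add: field_simps)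
  finally show ?thesis by (simp add: M1_y y_def[symmetric] \<theta>_def[symmetric])
qed

definition T_defect :: "nat \<Rightarrow> real" where
  "T_defect n = T (Suc n) - T n - kappa * C"

definition u_defect :: "nat \<Rightarrow> real" where
  "u_defect n = u (Suc n) - u n - a * M1 C c1 (x (Suc n))"

lemma step_size_tendsto_zero: "(\<lambda>n. C * x (Suc n) powr a) \<longlonglongrightarrow> 0"
proof -
  have "(\<lambda>n. x (Suc n) powr a) \<longlonglongrightarrow> 0"
    using LIMSEQ_Suc[OF x_tendsto_zero] a_pos x_pos
    by (intro tendsto_zero_powrI) (auto intro!: always_eventually less_imp_le)
  thus ?thesis using tendsto_mult_right_zero by blast
qed

lemma step_size_at_right_zero: "filterlim (\<lambda>n. C * x (Suc n) powr a) (at_right 0) sequentially"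
proof (rule tendsto_imp_filterlim_at_right[OF step_size_tendsto_zero])
  have "0 < C * x (Suc n) powr a" for n using C_pos x_pos[of "Suc n"] by simp
  thus "eventually (\<lambda>n. 0 < C * x (Suc n) powr a) sequentially" by simp
qed

lemma theta_at_right_zero: "filterlim theta (at_right 0) sequentially"
proof (rule tendsto_imp_filterlim_at_right)
  show "theta \<longlonglongrightarrow> 0"
    by (rule tendsto_sandwich[OF _ _ tendsto_const step_size_tendsto_zero])
      (use theta_pos theta_le in \<open>auto intro!: always_eventually less_imp_le\<close>)
  show "eventually (\<lambda>n. 0 < theta n) sequentially" using theta_pos by simp
qed

lemma defect_bound_tendsto_zero:
  "(\<lambda>n. C * \<bar>((1 + theta n) powr (- p) - 1) / theta n + p\<bar>) \<longlonglongrightarrow> 0"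
proof -
  have "(\<lambda>n. ((1 + theta n) powr (- p) - 1) / theta n) \<longlonglongrightarrow> - p"
    by (rule filterlim_compose[OF tendsto_powr_difference_quotient theta_at_right_zero])
  hence "(\<lambda>n. C * \<bar>((1 + theta n) powr (- p) - 1) / theta n + p\<bar>) \<longlonglongrightarrow> C * \<bar>- p + p\<bar>"
    by (intro tendsto_intros)
  thus ?thesis by simp
qed

lemma T_defect_non_crossing:
  assumes "\<not> crossing n"
  shows "\<bar>T_defect n\<bar> \<le> C * \<bar>((1 + theta n) powr (- kappa) - 1) / theta n + kappa\<bar>"
proof -
  have "T_defect n = - C * (((1 + theta n) powr (- kappa) - 1) / theta n + kappa)"
    using T_increment_non_crossing[OF assms] theta_pos[of n]
    by (simp add: T_defect_def field_simps)
  thus ?thesis using C_pos by (simp add: abs_mult)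
qed

lemma u_defect_non_crossing:
  assumes "\<not> crossing n"
  shows "\<bar>u_defect n\<bar> \<le> C * \<bar>((1 + theta n) powr (- a) - 1) / theta n + a\<bar>"
proof -
  have "u_defect n = - M1 C c1 (x (Suc n)) * (((1 + theta n) powr (- a) - 1) / theta n + a)"
    using u_increment_non_crossing[OF assms] theta_pos[of n]
    by (simp add: u_defect_def field_simps)
  moreover have "0 \<le> M1 C c1 (x (Suc n))" "M1 C c1 (x (Suc n)) \<le> C"
    using M1_bounds[OF x_pos x_less_1, of "Suc n"] C_pos by auto
  ultimately show ?thesis by (simp add: abs_mult mult_right_mono)
qed

lemma T_increment_crossing_le:
  assumes "crossing n" and small: "C * x (Suc n) powr a < c1"
  shows "T (Suc n) - T n
    \<le> 3 * C * (((1 + C * x (Suc n) powr a) powr kappa - 1) / (C * x (Suc n) powr a))"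
proof -
  define y s where "y = x (Suc n)" and "s = C * y powr a"
  have y: "0 < y" "y < x n" using x_pos x_Suc_less by (auto simp: y_def)
  have s: "0 < s" using C_pos y by (simp add: s_def)
  have ratio: "x n / y \<le> 1 + s"
    using x_upper[of n] y by (simp add: s_def y_def[symmetric] divide_le_eq mult.commute)
  have "ln (x n / y) \<le> ln (1 + s)" using ratio y by (intro ln_mono) auto
  also have "\<dots> \<le> s" using s by (intro ln_add_one_self_le_self) simp
  finally have "depth y - depth (x n) < 1"
    using small c1_pos y by (simp add: s_def y_def[symmetric] depth_def ln_div field_simps)
  hence "T (Suc n) - T n \<le> 3 * base powr depth y * ((2 * base) powr (depth y - depth (x n)) - 1)"
    using clock_diff_le_across_integer[OF base_gt_1 depth_Suc_gt[of n]] assms(1)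
    by (simp add: T_def crossing_def y_def)
  also have "\<dots> = 3 * y powr (- a) * ((x n / y) powr kappa - 1)"
    using y x_pos[of n] by (simp add: base_powr_depth two_base_powr_depth_diff)
  also have "\<dots> \<le> 3 * y powr (- a) * ((1 + s) powr kappa - 1)"
    using ratio y kappa_pos by (intro mult_left_mono diff_right_mono powr_mono2) auto
  also have "\<dots> = 3 * (y powr (- a) * s) * (((1 + s) powr kappa - 1) / s)"
    using s by simp
  also have "y powr (- a) * s = C"
    using y by (simp add: s_def powr_minus field_simps)
  finally show ?thesis by (simp add: s_def y_def)
qed

lemma T_defect_crossing_eventually:
  "eventually (\<lambda>n. crossing n \<longrightarrow> \<bar>T_defect n\<bar> \<le> 3 * C * (kappa + 1) + kappa * C) sequentially"
proof -
  have "(\<lambda>n. ((1 + C * x (Suc n) powr a) powr kappa - 1) / (C * x (Suc n) powr a)) \<longlonglongrightarrow> kappa"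
    by (rule filterlim_compose[OF tendsto_powr_difference_quotient step_size_at_right_zero])
  hence "eventually (\<lambda>n. ((1 + C * x (Suc n) powr a) powr kappa - 1) / (C * x (Suc n) powr a)
      < kappa + 1) sequentially"
    by (rule order_tendstoD) simp
  moreover have "eventually (\<lambda>n. C * x (Suc n) powr a < c1) sequentially"
    using step_size_tendsto_zero c1_pos by (rule order_tendstoD)
  ultimately show ?thesis
  proof eventually_elim
    case (elim n)
    show ?case
    proof
      assume "crossing n"
      have "T (Suc n) - T n \<le> 3 * C * (kappa + 1)"
        using T_increment_crossing_le[OF \<open>crossing n\<close> elim(2)] elim(1) C_pos
          mult_left_mono[OF less_imp_le[OF elim(1)], of "3 * C"]
        by linarith
      moreover have "T n \<le> T (Suc n)"
        using strict_mono_less[OF strict_mono_clock[OF base_gt_1]] depth_Suc_gt[of n]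
        by (simp add: T_def less_imp_le)
      moreover have "0 < kappa * C" using kappa_pos C_pos by simp
      ultimately show "\<bar>T_defect n\<bar> \<le> 3 * C * (kappa + 1) + kappa * C"
        unfolding T_defect_def abs_le_iff by linarith
    qed
  qed
qed

lemma u_increment_bounds: "0 \<le> u (Suc n) - u n" "u (Suc n) - u n \<le> a * C"
proof -
  define y s where "y = x (Suc n)" and "s = C * y powr a"
  have y: "0 < y" "y < x n" and s: "0 \<le> s"
    using x_pos x_Suc_less C_pos by (auto simp: y_def s_def)
  have xn: "x n \<le> y * (1 + s)" using x_upper by (simp add: y_def s_def)
  have "x n powr (- a) \<le> y powr (- a)" using y a_pos by (intro powr_mono2') auto
  thus "0 \<le> u (Suc n) - u n" by (simp add: u_def y_def)
  have "y powr (- a) * (1 - a * s) \<le> y powr (- a) * (1 + s) powr (- a)"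
    using one_minus_mult_le_powr_neg[of a s] a_pos s by (intro mult_left_mono) auto
  also have "\<dots> = (y * (1 + s)) powr (- a)" using y s by (simp add: powr_mult)
  also have "\<dots> \<le> x n powr (- a)" using xn y a_pos by (intro powr_mono2') auto
  finally have "y powr (- a) - a * (y powr (- a) * s) \<le> x n powr (- a)" by (simp add: algebra_simps)
  moreover have "y powr (- a) * s = C" using y by (simp add: s_def powr_minus field_simps)
  ultimately show "u (Suc n) - u n \<le> a * C" by (simp add: u_def y_def[symmetric])
qed

lemma u_defect_bound: "\<bar>u_defect n\<bar> \<le> a * C"
proof -
  have "a * (C / 2) \<le> a * M1 C c1 (x (Suc n))" "a * M1 C c1 (x (Suc n)) \<le> a * C"
    using M1_bounds[OF x_pos x_less_1, of "Suc n"] a_pos by auto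
  moreover have "0 \<le> a * (C / 2)" using a_pos C_pos by simp
  ultimately show ?thesis using u_increment_bounds[of n] unfolding u_defect_def by linarith
qed

lemma u_le_affine: "u n \<le> u 0 + a * C * real n"
proof (induction n)
  case (Suc n)
  thus ?case using u_increment_bounds(2)[of n] by (simp add: algebra_simps)
qed simp

lemma depth_eq_ln_u: "depth (x n) = ln (u n) / (a * c1)"
  using base_gt_1 a_pos c1_pos by (simp add: u_eq_base_powr ln_powr base_def)

lemma card_crossings_le: "real (card {j. j < n \<and> crossing j}) \<le> depth (x n) - depth (x 0) + 1"
proof -
  have "real (card {j. j < n \<and> crossing j}) = (\<Sum>j<n. if crossing j then 1 else 0)"
    by (simp add: sum.inter_filter[symmetric])
  also have "\<dots> \<le> (\<Sum>j<n. real_of_int \<lfloor>depth (x (Suc j))\<rfloor> - real_of_int \<lfloor>depth (x j)\<rfloor>)"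
  proof (rule sum_mono)
    fix j
    have "\<lfloor>depth (x j)\<rfloor> \<le> \<lfloor>depth (x (Suc j))\<rfloor>" using depth_Suc_gt[of j] by (intro floor_mono) simp
    thus "(if crossing j then 1 else 0) \<le> real_of_int \<lfloor>depth (x (Suc j))\<rfloor> - real_of_int \<lfloor>depth (x j)\<rfloor>"
      by (auto simp: crossing_def)
  qed
  also have "\<dots> = real_of_int \<lfloor>depth (x n)\<rfloor> - real_of_int \<lfloor>depth (x 0)\<rfloor>"
    by (rule sum_lessThan_telescope)
  also have "\<dots> \<le> depth (x n) - depth (x 0) + 1"
    using of_int_floor_le[of "depth (x n)"] real_of_int_floor_gt_diff_one[of "depth (x 0)"] by linarith
  finally show ?thesis .
qed

lemma crossings_sparse: "(\<lambda>n. real (card {j. j < n \<and> crossing j}) / real n) \<longlonglongrightarrow> 0"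
proof -
  have u0: "0 < u 0" using x_pos[of 0] by (simp add: u_def)
  define bound where "bound n = (ln (u 0 + a * C * real n) / (a * c1) + (1 - depth (x 0))) / real n"
    for n
  have "real (card {j. j < n \<and> crossing j}) \<le> ln (u 0 + a * C * real n) / (a * c1) + (1 - depth (x 0))"
    for n
  proof -
    have "ln (u n) \<le> ln (u 0 + a * C * real n)"
      using u_le_affine[of n] x_pos[of n] by (intro ln_mono) (auto simp: u_def)
    hence "depth (x n) \<le> ln (u 0 + a * C * real n) / (a * c1)"
      using a_pos c1_pos by (simp add: depth_eq_ln_u divide_right_mono)
    thus ?thesis using card_crossings_le[of n] by linarith
  qed
  hence "real (card {j. j < n \<and> crossing j}) / real n \<le> bound n" for n
    unfolding bound_def by (rule divide_right_mono) simp
  hence le_bound: "eventually (\<lambda>n. norm (real (card {j. j < n \<and> crossing j}) / real n) \<le> bound n)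
      sequentially"
    by simp
  have "bound = (\<lambda>n. 1 / (a * c1) * (ln (u 0 + a * C * real n) / real n)
      + (1 - depth (x 0)) / real n)"
    by (rule ext) (simp add: bound_def add_divide_distrib)
  moreover have "(\<lambda>n. 1 / (a * c1) * (ln (u 0 + a * C * real n) / real n) + (1 - depth (x 0)) / real n)
      \<longlonglongrightarrow> 1 / (a * c1) * 0 + 0"
    using u0 a_pos C_pos
    by (intro tendsto_add tendsto_mult tendsto_ln_affine_over_n lim_const_over_n tendsto_const) auto
  ultimately have "bound \<longlonglongrightarrow> 0" by simp
  thus ?thesis using le_bound by (rule Lim_null_comparison[rotated])
qed

lemma T_over_n_tendsto: "(\<lambda>n. T n / real n) \<longlonglongrightarrow> kappa * C"
proof -
  have defects: "(\<lambda>n. (\<Sum>j<n. T_defect j) / real n) \<longlonglongrightarrow> 0"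
    by (rule cesaro_tendsto_zero_sparse_exceptions[OF T_defect_non_crossing defect_bound_tendsto_zero
          T_defect_crossing_eventually crossings_sparse])
  have "(\<Sum>j<n. T_defect j) = (\<Sum>j<n. T (Suc j) - T j) - (\<Sum>j<n. kappa * C)" for n
    unfolding T_defect_def by (rule sum_subtractf)
  hence T_eq: "T n = T 0 + real n * (kappa * C) + (\<Sum>j<n. T_defect j)" for n
    by (simp add: sum_lessThan_telescope)
  have T_over_n_eq: "T 0 / real n + kappa * C + (\<Sum>j<n. T_defect j) / real n = T n / real n"
    if "0 < n" for n
    using that by (simp add: T_eq[of n] field_simps)
  have "eventually (\<lambda>n. T 0 / real n + kappa * C + (\<Sum>j<n. T_defect j) / real n = T n / real n)
      sequentially"
    using eventually_gt_at_top[of 0] by eventually_elim (rule T_over_n_eq)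
  moreover have "(\<lambda>n. T 0 / real n + kappa * C + (\<Sum>j<n. T_defect j) / real n) \<longlonglongrightarrow> 0 + kappa * C + 0"
    by (intro tendsto_add lim_const_over_n tendsto_const defects)
  ultimately show ?thesis by (simp add: Lim_transform_eventually)
qed

lemma u_defect_average_tendsto_zero: "(\<lambda>n. (\<Sum>j<n. u_defect j) / real n) \<longlonglongrightarrow> 0"
proof -
  have "eventually (\<lambda>n. crossing n \<longrightarrow> \<bar>u_defect n\<bar> \<le> a * C) sequentially"
    using u_defect_bound by simp
  with u_defect_non_crossing defect_bound_tendsto_zero[of a] show ?thesis
    using crossings_sparse by (rule cesaro_tendsto_zero_sparse_exceptions)
qed

lemma sum_M1_eq: "(\<Sum>j = 1..n. M1 C c1 (x j)) = (u n - u 0 - (\<Sum>j<n. u_defect j)) / a"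
proof -
  have "(\<Sum>j<n. u_defect j) = (\<Sum>j<n. u (Suc j) - u j) - (\<Sum>j<n. a * M1 C c1 (x (Suc j)))"
    unfolding u_defect_def by (rule sum_subtractf)
  hence "(\<Sum>j<n. u_defect j) = u n - u 0 - a * (\<Sum>j<n. M1 C c1 (x (Suc j)))"
    by (simp add: sum_distrib_left sum_lessThan_telescope)
  thus ?thesis using a_pos by (simp add: sum.atLeast1_atMost_eq field_simps)
qed

lemma depth_offset_convergent:
  fixes w :: "nat \<Rightarrow> nat"
  assumes w: "(\<lambda>k. real (w k) / base ^ k) \<longlonglongrightarrow> 1"
  shows "convergent (\<lambda>k. depth (x (w k)) - real k)"
proof -
  have w_at_top: "filterlim w at_top sequentially"
    by (rule filterlim_at_top_if_asymp_power[OF base_gt_1 w])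
  have T_w: "T (w k) = base ^ k * clock base (depth (x (w k)) - real k)" for k
    using clock_add_of_nat[OF base_gt_1, of "depth (x (w k)) - real k" k] by (simp add: T_def)
  have "(\<lambda>k. T (w k) / real (w k) * (real (w k) / base ^ k)) \<longlonglongrightarrow> kappa * C * 1"
    using filterlim_compose[OF T_over_n_tendsto w_at_top] w by (rule tendsto_mult)
  moreover have "eventually (\<lambda>k. T (w k) / real (w k) * (real (w k) / base ^ k)
      = clock base (depth (x (w k)) - real k)) sequentially"
    using eventually_compose_filterlim[OF eventually_gt_at_top[of 0] w_at_top]
    by eventually_elim (use base_gt_1 in \<open>simp add: T_w\<close>)
  ultimately have "(\<lambda>k. clock base (depth (x (w k)) - real k)) \<longlonglongrightarrow> kappa * C"
    by (simp add: Lim_transform_eventually)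
  thus ?thesis using kappa_pos C_pos by (intro convergent_if_clock_comp_tendsto[OF base_gt_1]) auto
qed

lemma M0_convergent_along:
  fixes w :: "nat \<Rightarrow> nat"
  assumes w: "(\<lambda>k. real (w k) / base ^ k) \<longlonglongrightarrow> 1"
  shows "convergent (\<lambda>k. M0 C c1 x (w k))"
proof -
  have w_at_top: "filterlim w at_top sequentially"
    by (rule filterlim_at_top_if_asymp_power[OF base_gt_1 w])
  define \<sigma> where "\<sigma> = (\<lambda>k. depth (x (w k)) - real k)"
  obtain \<sigma>_lim where \<sigma>: "\<sigma> \<longlonglongrightarrow> \<sigma>_lim"
    using depth_offset_convergent[OF w] by (auto simp: convergent_def \<sigma>_def)
  have u_w: "u (w k) = base powr \<sigma> k * base ^ k" for k
    using base_gt_1 by (simp add: u_eq_base_powr \<sigma>_def powr_add[symmetric] powr_realpow[symmetric])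
  have M0_eq: "M0 C c1 x n = (u n - u 0 - (\<Sum>j<n. u_defect j)) / (a * real n)" for n
    unfolding M0_def sum_M1_eq by simp
  have "(\<lambda>k. (base powr \<sigma> k * (base ^ k / real (w k)) - u 0 / real (w k)
      - (\<Sum>j<w k. u_defect j) / real (w k)) / a) \<longlonglongrightarrow> (base powr \<sigma>_lim * inverse 1 - 0 - 0) / a"
  proof (intro tendsto_intros \<sigma>)
    show "(\<lambda>k. base ^ k / real (w k)) \<longlonglongrightarrow> inverse 1"
      using tendsto_inverse[OF w] by simp
    show "(\<lambda>k. u 0 / real (w k)) \<longlonglongrightarrow> 0"
      by (rule filterlim_compose[OF lim_const_over_n w_at_top])
    show "(\<lambda>k. (\<Sum>j<w k. u_defect j) / real (w k)) \<longlonglongrightarrow> 0"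
      by (rule filterlim_compose[OF u_defect_average_tendsto_zero w_at_top])
  qed (use base_gt_1 a_pos in auto)
  moreover have "eventually (\<lambda>k. (base powr \<sigma> k * (base ^ k / real (w k)) - u 0 / real (w k)
      - (\<Sum>j<w k. u_defect j) / real (w k)) / a = M0 C c1 x (w k)) sequentially"
    using eventually_compose_filterlim[OF eventually_gt_at_top[of 0] w_at_top]
    by eventually_elim (use a_pos in \<open>simp add: M0_eq u_w field_simps\<close>)
  ultimately show ?thesis
    by (auto simp: convergent_def dest: Lim_transform_eventually)
qed

end

theorem proposition4p3:
  fixes \<alpha> C0 c1 :: real and x :: "nat \<Rightarrow> real"
  assumes "0 < \<alpha>" "\<alpha> < 1" "0 < c1"
    and "(fM1 \<alpha> C0 c1 \<longlongrightarrow> 1) (at_left (1/2))"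
    and "is_orbit \<alpha> C0 c1 x"
  defines "c \<equiv> exp (\<alpha> * c1)"
  defines "w \<equiv> (\<lambda>k::nat. nat \<lfloor>c ^ k\<rfloor>)"
  shows "\<exists>\<zeta>::real. (\<lambda>k. real (w (Suc k)) / real (w k)) \<longlonglongrightarrow> c
                 \<and> (\<lambda>k. M0 C0 c1 x (w k)) \<longlonglongrightarrow> \<zeta>"
proof -
  interpret backward_orbit \<alpha> C0 c1 x
    using assms(1,3,5) C0_pos_if_left_limit_one[OF assms(4)] by unfold_locales
  have c: "c = base" by (simp add: c_def base_def)
  have w_asymp: "(\<lambda>k. real (w k) / c ^ k) \<longlonglongrightarrow> 1"
    unfolding w_def c by (rule floor_power_over_power_tendsto[OF base_gt_1])
  have "(\<lambda>k. real (w (Suc k)) / real (w k)) \<longlonglongrightarrow> c"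
    using w_asymp base_gt_1 by (intro Suc_ratio_tendsto_if_asymp_power) (auto simp: c)
  moreover have "convergent (\<lambda>k. M0 C0 c1 x (w k))"
    using w_asymp unfolding c by (rule M0_convergent_along)
  ultimately show ?thesis by (auto simp: convergent_def)
qed

end
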